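(* Let $\lambda,\mu\geq 0$ be real with $(\lambda,\mu)\neq(1,1)$, and for each positive integer $w$ let $$D_w(p)=(1-\lambda^2p^2)(1-\mu^2p^2)-(\lambda^2-p^2)(\mu^2-p^2)p^{2w}.$$ Then for every positive integer $w$, all zeros of $D_w$ other than $p=\pm1$ are simple, and there is at most one positive integer $w$ for which $p=\pm 1$ is a multiple zero of $D_w$.
   Context: $D_w(p)$ is the denominator polynomial of the generating function of loops (directed paths with steps $(1,\pm1)$ starting and ending on the line $y=0$ and confined to the strip $0\le y\le w$), with wall weights $a=1+\lambda^2$ on the bottom wall and $b=1+\mu^2$ on the top wall. *)

theory Defs
  imports Complex_Main "HOL-Computational_Algebra.Polynomial"
begin

definition Dpoly :: "real \<Rightarrow> real \<Rightarrow> nat \<Rightarrow> complex poly" where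
  "Dpoly lam mu w =
     [:1, 0, - complex_of_real (lam^2):] * [:1, 0, - complex_of_real (mu^2):]
     - [:complex_of_real (lam^2), 0, -1:] * [:complex_of_real (mu^2), 0, -1:]
       * monom 1 (2 * w)"

end

theory Submission
  imports Defs
begin

text \<open>Substituting \<open>z = p + 1/p\<close> turns \<open>D\<^sub>w\<close> into the last member \<open>P\<^sub>w\<^sub>+\<^sub>1\<close> of a family of
  orthogonal polynomials with three-term recurrence
  \<open>P\<^sub>k\<^sub>+\<^sub>2(z) = z P\<^sub>k\<^sub>+\<^sub>1(z) - e\<^sub>k P\<^sub>k(z)\<close>, where the weights \<open>e\<^sub>k\<close> are all positive:
  \<open>D\<^sub>w(p) = -(p\<^sup>2 - 1) p\<^sup>w\<^sup>+\<^sup>1 P\<^sub>w\<^sub>+\<^sub>1(p + 1/p)\<close>.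
  By the Christoffel--Darboux identity such polynomials have only real and simple zeros,
  and since \<open>p \<mapsto> p + 1/p\<close> is locally invertible away from \<open>p = \<plusminus>1\<close>, every zero of
  \<open>D\<^sub>w\<close> other than \<open>\<plusminus>1\<close> is simple.
  At \<open>p = \<plusminus>1\<close> one computes \<open>D\<^sub>w'(\<plusminus>1) = \<plusminus>(4(\<lambda>\<^sup>2\<mu>\<^sup>2 - 1) - 2w(\<lambda>\<^sup>2 - 1)(\<mu>\<^sup>2 - 1))\<close>,
  an affine function of \<open>w\<close> that vanishes identically only for \<open>\<lambda> = \<mu> = 1\<close>.\<close>

lemma order_eq_1_if_pderiv_nonzero:
  fixes p :: "'a::{idom,semiring_char_0} poly"
  assumes "p \<noteq> 0" "poly p a = 0" "poly (pderiv p) a \<noteq> 0"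
  shows "order a p = 1"
  using order_pderiv[OF assms(1,2)] order_0I[OF assms(3)] by simp

lemma poly_pderiv_eq_0_if_order_ge_2:
  fixes p :: "'a::{idom,semiring_char_0} poly"
  assumes "p \<noteq> 0" "order a p \<ge> 2"
  shows "poly (pderiv p) a = 0"
proof -
  have "poly p a = 0" using assms order_root by fastforce
  then have "order a (pderiv p) \<noteq> 0" using order_pderiv[OF assms(1)] assms(2) by simp
  then show ?thesis using order_root by blast
qed

fun orth_poly :: "(nat \<Rightarrow> real) \<Rightarrow> nat \<Rightarrow> complex \<Rightarrow> complex" where
  "orth_poly e 0 z = 1"
| "orth_poly e (Suc 0) z = z"
| "orth_poly e (Suc (Suc k)) z = z * orth_poly e (Suc k) z - of_real (e k) * orth_poly e k z"

fun orth_poly_deriv :: "(nat \<Rightarrow> real) \<Rightarrow> nat \<Rightarrow> complex \<Rightarrow> complex" where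
  "orth_poly_deriv e 0 z = 0"
| "orth_poly_deriv e (Suc 0) z = 1"
| "orth_poly_deriv e (Suc (Suc k)) z =
     orth_poly e (Suc k) z + z * orth_poly_deriv e (Suc k) z - of_real (e k) * orth_poly_deriv e k z"

text \<open>The squared norm of \<open>P\<^sub>k\<close> with respect to the orthogonality measure.\<close>
definition orth_norm :: "(nat \<Rightarrow> real) \<Rightarrow> nat \<Rightarrow> real" where
  "orth_norm e k = (\<Prod>j<k. e j)"

lemma orth_norm_pos: "(\<And>j. e j > 0) \<Longrightarrow> orth_norm e k > 0"
  unfolding orth_norm_def by (rule prod_pos) auto

lemma orth_norm_Suc: "orth_norm e (Suc k) = orth_norm e k * e k"
  unfolding orth_norm_def by simp

lemma orth_poly_has_field_derivative:
  "(orth_poly e k has_field_derivative orth_poly_deriv e k z) (at z)"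
proof (induction e k z rule: orth_poly.induct)
  case (3 e k z)
  show ?case unfolding orth_poly.simps orth_poly_deriv.simps
    by (rule derivative_eq_intros 3 | simp)+
qed (auto intro!: derivative_eq_intros)

lemma orth_poly_cnj: "orth_poly e k (cnj z) = cnj (orth_poly e k z)"
  by (induction e k z rule: orth_poly.induct) auto

lemma christoffel_darboux:
  assumes "\<And>j. e j > 0"
  shows "(a - b) * (\<Sum>k\<le>m. orth_poly e k a * orth_poly e k b / of_real (orth_norm e k))
       = (orth_poly e (Suc m) a * orth_poly e m b - orth_poly e m a * orth_poly e (Suc m) b)
         / of_real (orth_norm e m)"
proof (induction m)
  case (Suc m)
  have "orth_norm e m > 0" "e m > 0" by (simp_all add: orth_norm_pos assms)
  have "(a - b) * (\<Sum>k\<le>Suc m. orth_poly e k a * orth_poly e k b / of_real (orth_norm e k))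
     = (a - b) * (\<Sum>k\<le>m. orth_poly e k a * orth_poly e k b / of_real (orth_norm e k))
       + (a - b) * (orth_poly e (Suc m) a * orth_poly e (Suc m) b / of_real (orth_norm e (Suc m)))"
    by (simp add: algebra_simps)
  also have "\<dots> = (orth_poly e (Suc (Suc m)) a * orth_poly e (Suc m) b
                    - orth_poly e (Suc m) a * orth_poly e (Suc (Suc m)) b) / of_real (orth_norm e (Suc m))"
    unfolding Suc orth_norm_Suc using \<open>orth_norm e m > 0\<close> \<open>e m > 0\<close> by (simp add: field_simps)
  finally show ?case .
qed (simp add: orth_norm_def)

lemma christoffel_darboux_confluent:
  assumes "\<And>j. e j > 0"
  shows "(\<Sum>k\<le>m. orth_poly e k a * orth_poly e k a / of_real (orth_norm e k))
       = (orth_poly_deriv e (Suc m) a * orth_poly e m a - orth_poly_deriv e m a * orth_poly e (Suc m) a)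
         / of_real (orth_norm e m)"
proof (induction m)
  case (Suc m)
  have "orth_norm e m > 0" "e m > 0" by (simp_all add: orth_norm_pos assms)
  have "(\<Sum>k\<le>Suc m. orth_poly e k a * orth_poly e k a / of_real (orth_norm e k))
     = (\<Sum>k\<le>m. orth_poly e k a * orth_poly e k a / of_real (orth_norm e k))
       + orth_poly e (Suc m) a * orth_poly e (Suc m) a / of_real (orth_norm e (Suc m))"
    by simp
  also have "\<dots> = (orth_poly_deriv e (Suc (Suc m)) a * orth_poly e (Suc m) a
                    - orth_poly_deriv e (Suc m) a * orth_poly e (Suc (Suc m)) a) / of_real (orth_norm e (Suc m))"
    unfolding Suc orth_norm_Suc using \<open>orth_norm e m > 0\<close> \<open>e m > 0\<close> by (simp add: field_simps)
  finally show ?case .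
qed (simp add: orth_norm_def)

lemma orth_poly_weighted_sum_cnj:
  "(\<Sum>k\<le>m. orth_poly e k a * cnj (orth_poly e k a) / of_real (orth_norm e k))
   = of_real (\<Sum>k\<le>m. (cmod (orth_poly e k a))\<^sup>2 / orth_norm e k)"
  unfolding of_real_sum by (rule sum.cong) (auto simp: complex_norm_square[symmetric])

lemma orth_poly_weighted_norm_sum_pos:
  assumes "\<And>j. e j > 0"
  shows "(\<Sum>k\<le>m. (cmod (orth_poly e k a))\<^sup>2 / orth_norm e k) > 0"
proof -
  have "(cmod (orth_poly e 0 a))\<^sup>2 / orth_norm e 0 \<le> (\<Sum>k\<le>m. (cmod (orth_poly e k a))\<^sup>2 / orth_norm e k)"
    by (rule member_le_sum) (auto intro!: divide_nonneg_pos orth_norm_pos assms)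
  then show ?thesis by (simp add: orth_norm_def)
qed

lemma orth_poly_root_real:
  assumes "\<And>j. e j > 0" and "orth_poly e (Suc m) a = 0"
  shows "cnj a = a"
proof -
  define X where "X = (\<Sum>k\<le>m. (cmod (orth_poly e k a))\<^sup>2 / orth_norm e k)"
  have "(a - cnj a) * of_real X = 0"
    using christoffel_darboux[OF assms(1), where a=a and b="cnj a" and m=m] assms(2)
    unfolding orth_poly_cnj orth_poly_weighted_sum_cnj X_def by simp
  moreover have "X > 0" unfolding X_def by (rule orth_poly_weighted_norm_sum_pos[OF assms(1)])
  ultimately show ?thesis by simp
qed

lemma orth_poly_deriv_nonzero_at_root:
  assumes "\<And>j. e j > 0" and root: "orth_poly e (Suc m) a = 0"
  shows "orth_poly_deriv e (Suc m) a \<noteq> 0"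
proof -
  define X where "X = (\<Sum>k\<le>m. (cmod (orth_poly e k a))\<^sup>2 / orth_norm e k)"
  have "cnj (orth_poly e k a) = orth_poly e k a" for k
    using orth_poly_cnj[of e k a] orth_poly_root_real[OF assms] by simp
  then have "(\<Sum>k\<le>m. orth_poly e k a * orth_poly e k a / of_real (orth_norm e k)) = of_real X"
    using orth_poly_weighted_sum_cnj[where m=m and e=e and a=a] unfolding X_def by simp
  moreover have "X > 0" unfolding X_def by (rule orth_poly_weighted_norm_sum_pos[OF assms(1)])
  ultimately show ?thesis
    using christoffel_darboux_confluent[OF assms(1), where m=m and a=a] root by auto
qed

definition strip_weights :: "real \<Rightarrow> real \<Rightarrow> nat \<Rightarrow> nat \<Rightarrow> real" where
  "strip_weights L M w k = (if k = 0 then 1 + L else 1) * (if Suc k = w then 1 + M else 1)"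

lemma strip_weights_pos: "L \<ge> 0 \<Longrightarrow> M \<ge> 0 \<Longrightarrow> strip_weights L M w k > 0"
  unfolding strip_weights_def by auto

definition lifted_orth_poly :: "(nat \<Rightarrow> real) \<Rightarrow> nat \<Rightarrow> complex \<Rightarrow> complex" where
  "lifted_orth_poly e k p = (p\<^sup>2 - 1) * p ^ k * orth_poly e k (p + 1/p)"

lemma lifted_orth_poly_0: "lifted_orth_poly e 0 p = p\<^sup>2 - 1"
  unfolding lifted_orth_poly_def by simp

lemma lifted_orth_poly_Suc_0: "p \<noteq> 0 \<Longrightarrow> lifted_orth_poly e (Suc 0) p = p ^ 4 - 1"
  unfolding lifted_orth_poly_def by (simp add: field_simps power2_eq_square power4_eq_xxxx)

lemma lifted_orth_poly_Suc_Suc: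
  "p \<noteq> 0 \<Longrightarrow> lifted_orth_poly e (Suc (Suc k)) p
     = (p\<^sup>2 + 1) * lifted_orth_poly e (Suc k) p - of_real (e k) * p\<^sup>2 * lifted_orth_poly e k p"
  unfolding lifted_orth_poly_def by (simp add: field_simps power2_eq_square)

lemma lifted_orth_poly_strip_weights:
  assumes p: "p \<noteq> 0" and "Suc k \<le> w"
  shows "lifted_orth_poly (strip_weights L M w) (Suc k) p
       = p ^ (2 * k + 4) - 1 - of_real L * (p ^ (2 * k + 2) - p\<^sup>2)"
  using assms(2)
proof (induction k rule: less_induct)
  case (less k)
  let ?e = "strip_weights L M w"
  consider "k = 0" | "k = 1" | j where "k = Suc (Suc j)"
    by (metis One_nat_def not0_implies_Suc)
  then show ?case
  proof cases
    case 1
    then show ?thesis using lifted_orth_poly_Suc_0[OF p] by (simp add: power2_eq_square)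
  next
    case 2
    with less.prems have "?e 0 = 1 + L" unfolding strip_weights_def by auto
    then have "lifted_orth_poly ?e (Suc (Suc 0)) p = (p\<^sup>2 + 1) * (p ^ 4 - 1) - of_real (1 + L) * p\<^sup>2 * (p\<^sup>2 - 1)"
      using lifted_orth_poly_Suc_Suc[OF p, of ?e 0] lifted_orth_poly_Suc_0[OF p]
      by (simp add: lifted_orth_poly_0)
    then show ?thesis using 2 by (simp add: algebra_simps eval_nat_numeral)
  next
    case 3
    with less.prems have e: "?e (Suc j) = 1" unfolding strip_weights_def by auto
    have "j < k" "Suc j \<le> w" "Suc j < k" "Suc (Suc j) \<le> w" using less.prems 3 by simp_all
    note IH = less.IH[OF this(1,2)] less.IH[OF this(3,4)]
    have pow: "p ^ (2 * j + c) = p ^ (2 * j) * p ^ c" for c by (simp add: power_add)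
    have exps: "2 * Suc j + 4 = 2 * j + 6" "2 * Suc j + 2 = 2 * j + 4"
      "2 * Suc (Suc j) + 4 = 2 * j + 8" "2 * Suc (Suc j) + 2 = 2 * j + 6" by simp_all
    show ?thesis
      unfolding 3 lifted_orth_poly_Suc_Suc[OF p, of ?e "Suc j"] IH e exps pow of_real_1 by algebra
  qed
qed

lemma lifted_orth_poly_strip_weights_top:
  assumes p: "p \<noteq> 0" and "w > 0"
  shows "lifted_orth_poly (strip_weights L M w) (Suc w) p
       = - ((1 - of_real L * p\<^sup>2) * (1 - of_real M * p\<^sup>2) - (of_real L - p\<^sup>2) * (of_real M - p\<^sup>2) * p ^ (2 * w))"
proof (cases "w = 1")
  case True
  have e: "strip_weights L M (Suc 0) 0 = (1 + L) * (1 + M)" unfolding strip_weights_def by simp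
  have two: "2 * Suc 0 = 2" by simp
  show ?thesis
    unfolding True One_nat_def lifted_orth_poly_Suc_Suc[OF p] lifted_orth_poly_Suc_0[OF p]
      lifted_orth_poly_0 e two of_real_mult of_real_add of_real_1
    by algebra
next
  case False
  then obtain j where w: "w = Suc (Suc j)" using \<open>w > 0\<close> by (metis One_nat_def gr0_implies_Suc not0_implies_Suc)
  let ?e = "strip_weights L M w"
  have e: "?e (Suc j) = 1 + M" using w unfolding strip_weights_def by simp
  have pow: "p ^ (2 * j + c) = p ^ (2 * j) * p ^ c" for c by (simp add: power_add)
  have exps: "2 * Suc j + 4 = 2 * j + 6" "2 * Suc j + 2 = 2 * j + 4" "2 * w = 2 * j + 4"
    and sw: "Suc w = Suc (Suc (Suc j))" and "Suc (Suc j) \<le> w" "Suc j \<le> w" using w by simp_all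
  note top = lifted_orth_poly_Suc_Suc[OF p, of ?e "Suc j", folded sw]
  note below = lifted_orth_poly_strip_weights[OF p \<open>Suc (Suc j) \<le> w\<close>]
    lifted_orth_poly_strip_weights[OF p \<open>Suc j \<le> w\<close>]
  show ?thesis unfolding top below e exps pow of_real_add of_real_1 by algebra
qed

lemma poly_Dpoly:
  "poly (Dpoly lam mu w) p
   = (1 - of_real (lam\<^sup>2) * p\<^sup>2) * (1 - of_real (mu\<^sup>2) * p\<^sup>2)
     - (of_real (lam\<^sup>2) - p\<^sup>2) * (of_real (mu\<^sup>2) - p\<^sup>2) * p ^ (2 * w)"
  unfolding Dpoly_def by (simp add: poly_monom) algebra

lemma poly_Dpoly_0: "w > 0 \<Longrightarrow> poly (Dpoly lam mu w) 0 = 1"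
  unfolding poly_Dpoly by simp

lemma Dpoly_nonzero: "w > 0 \<Longrightarrow> Dpoly lam mu w \<noteq> 0"
  by (metis poly_0 poly_Dpoly_0 zero_neq_one)

lemma poly_Dpoly_eq_lifted_orth_poly:
  "p \<noteq> 0 \<Longrightarrow> w > 0 \<Longrightarrow>
   poly (Dpoly lam mu w) p = - lifted_orth_poly (strip_weights (lam\<^sup>2) (mu\<^sup>2) w) (Suc w) p"
  using lifted_orth_poly_strip_weights_top[of p w "lam\<^sup>2" "mu\<^sup>2"] unfolding poly_Dpoly by simp

lemma lifted_orth_poly_has_field_derivative_at_root:
  assumes p: "p \<noteq> 0" and root: "orth_poly e k (p + 1/p) = 0"
  shows "(lifted_orth_poly e k has_field_derivative
           (p\<^sup>2 - 1) * p ^ k * ((1 - 1/p\<^sup>2) * orth_poly_deriv e k (p + 1/p))) (at p)"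
proof -
  have "((\<lambda>q. q + 1/q) has_field_derivative 1 - 1/p\<^sup>2) (at p)"
    using p by (auto intro!: derivative_eq_intros simp: field_simps power2_eq_square)
  from DERIV_chain2[OF orth_poly_has_field_derivative this]
  have inner: "((\<lambda>q. orth_poly e k (q + 1/q)) has_field_derivative
                 orth_poly_deriv e k (p + 1/p) * (1 - 1/p\<^sup>2)) (at p)" .
  have outer: "((\<lambda>q. (q\<^sup>2 - 1) * q ^ k) has_field_derivative 2 * p * p ^ k + (p\<^sup>2 - 1) * (of_nat k * p ^ (k - 1))) (at p)"
    by (auto intro!: derivative_eq_intros)
  show ?thesis
    using DERIV_mult[OF outer inner] root unfolding lifted_orth_poly_def[abs_def] by (simp add: ac_simps)
qed

lemma Dpoly_pderiv_nonzero:
  assumes w: "w > 0" and root: "poly (Dpoly lam mu w) p = 0" and "p \<noteq> 1" "p \<noteq> -1"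
  shows "poly (pderiv (Dpoly lam mu w)) p \<noteq> 0"
proof -
  let ?e = "strip_weights (lam\<^sup>2) (mu\<^sup>2) w"
  let ?z = "p + 1/p"
  have "p \<noteq> 0" using root poly_Dpoly_0[OF w] by auto
  have "p\<^sup>2 - 1 \<noteq> 0" using \<open>p \<noteq> 1\<close> \<open>p \<noteq> -1\<close> by (simp add: power2_eq_1_iff)
  have D_eq: "poly (Dpoly lam mu w) q = - lifted_orth_poly ?e (Suc w) q" if "q \<in> - {0}" for q
    using that w by (simp add: poly_Dpoly_eq_lifted_orth_poly)
  have z_root: "orth_poly ?e (Suc w) ?z = 0"
    using root D_eq[of p] \<open>p \<noteq> 0\<close> \<open>p\<^sup>2 - 1 \<noteq> 0\<close> by (simp add: lifted_orth_poly_def)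
  define d where "d = (p\<^sup>2 - 1) * p ^ Suc w * ((1 - 1/p\<^sup>2) * orth_poly_deriv ?e (Suc w) ?z)"
  have "(poly (Dpoly lam mu w) has_field_derivative - d) (at p)"
    unfolding d_def using DERIV_minus[OF lifted_orth_poly_has_field_derivative_at_root[OF \<open>p \<noteq> 0\<close> z_root]]
    by (rule has_field_derivative_transform_within_open[where S = "- {0}"])
      (use \<open>p \<noteq> 0\<close> D_eq in auto)
  then have "poly (pderiv (Dpoly lam mu w)) p = - d"
    using DERIV_unique poly_DERIV by blast
  moreover have "orth_poly_deriv ?e (Suc w) ?z \<noteq> 0"
    by (rule orth_poly_deriv_nonzero_at_root[OF strip_weights_pos z_root]) simp_all
  moreover have "1 - 1/p\<^sup>2 \<noteq> 0" using \<open>p \<noteq> 0\<close> \<open>p\<^sup>2 - 1 \<noteq> 0\<close> by (simp add: field_simps)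
  ultimately show ?thesis using \<open>p \<noteq> 0\<close> \<open>p\<^sup>2 - 1 \<noteq> 0\<close> unfolding d_def by simp
qed

lemma order_Dpoly_eq_1:
  assumes "w > 0" "poly (Dpoly lam mu w) p = 0" "p \<noteq> 1" "p \<noteq> -1"
  shows "order p (Dpoly lam mu w) = 1"
  using order_eq_1_if_pderiv_nonzero Dpoly_nonzero Dpoly_pderiv_nonzero assms by blast

lemma poly_pderiv_Dpoly:
  "poly (pderiv (Dpoly lam mu w)) q =
     - 2 * of_real (lam\<^sup>2) * q * (1 - of_real (mu\<^sup>2) * q\<^sup>2) - 2 * of_real (mu\<^sup>2) * q * (1 - of_real (lam\<^sup>2) * q\<^sup>2)
     + 2 * q * (of_real (mu\<^sup>2) - q\<^sup>2) * q ^ (2 * w) + 2 * q * (of_real (lam\<^sup>2) - q\<^sup>2) * q ^ (2 * w)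
     - (of_real (lam\<^sup>2) - q\<^sup>2) * (of_real (mu\<^sup>2) - q\<^sup>2) * (of_nat (2 * w) * q ^ (2 * w - 1))"
proof -
  have "(poly (Dpoly lam mu w) has_field_derivative
     - 2 * of_real (lam\<^sup>2) * q * (1 - of_real (mu\<^sup>2) * q\<^sup>2) - 2 * of_real (mu\<^sup>2) * q * (1 - of_real (lam\<^sup>2) * q\<^sup>2)
     + 2 * q * (of_real (mu\<^sup>2) - q\<^sup>2) * q ^ (2 * w) + 2 * q * (of_real (lam\<^sup>2) - q\<^sup>2) * q ^ (2 * w)
     - (of_real (lam\<^sup>2) - q\<^sup>2) * (of_real (mu\<^sup>2) - q\<^sup>2) * (of_nat (2 * w) * q ^ (2 * w - 1))) (at q)"
    unfolding poly_Dpoly[abs_def]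
    by (rule derivative_eq_intros refl | simp)+ (simp add: algebra_simps power2_eq_square)
  then show ?thesis using DERIV_unique poly_DERIV by blast
qed

lemma poly_pderiv_Dpoly_1:
  "poly (pderiv (Dpoly lam mu w)) 1 = of_real (4 * (lam\<^sup>2 * mu\<^sup>2 - 1) - 2 * real w * (lam\<^sup>2 - 1) * (mu\<^sup>2 - 1))"
  unfolding poly_pderiv_Dpoly by (simp add: algebra_simps)

lemma poly_pderiv_Dpoly_neg1:
  assumes "w > 0"
  shows "poly (pderiv (Dpoly lam mu w)) (-1) = - of_real (4 * (lam\<^sup>2 * mu\<^sup>2 - 1) - 2 * real w * (lam\<^sup>2 - 1) * (mu\<^sup>2 - 1))"
proof -
  have "odd (2 * w - 1)" using assms by presburger
  then have "(-1 :: complex) ^ (2 * w - 1) = -1" by simp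
  then show ?thesis unfolding poly_pderiv_Dpoly by (simp add: algebra_simps)
qed

lemma Dpoly_multiple_root_pm1:
  assumes w: "w > 0" and "order 1 (Dpoly lam mu w) \<ge> 2 \<or> order (-1) (Dpoly lam mu w) \<ge> 2"
  shows "2 * real w * (lam\<^sup>2 - 1) * (mu\<^sup>2 - 1) = 4 * (lam\<^sup>2 * mu\<^sup>2 - 1)"
proof -
  have "poly (pderiv (Dpoly lam mu w)) 1 = 0 \<or> poly (pderiv (Dpoly lam mu w)) (-1) = 0"
    using assms(2) poly_pderiv_eq_0_if_order_ge_2[OF Dpoly_nonzero[OF w]] by blast
  then have "complex_of_real (4 * (lam\<^sup>2 * mu\<^sup>2 - 1) - 2 * real w * (lam\<^sup>2 - 1) * (mu\<^sup>2 - 1)) = 0"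
    unfolding poly_pderiv_Dpoly_1 poly_pderiv_Dpoly_neg1[OF w] by auto
  then show ?thesis unfolding of_real_eq_0_iff by linarith
qed

lemma critical_width_unique:
  fixes lam mu :: real
  assumes "lam \<ge> 0" "mu \<ge> 0" "(lam, mu) \<noteq> (1, 1)"
    and "2 * real w1 * (lam\<^sup>2 - 1) * (mu\<^sup>2 - 1) = 4 * (lam\<^sup>2 * mu\<^sup>2 - 1)"
    and "2 * real w2 * (lam\<^sup>2 - 1) * (mu\<^sup>2 - 1) = 4 * (lam\<^sup>2 * mu\<^sup>2 - 1)"
  shows "w1 = w2"
proof (cases "(lam\<^sup>2 - 1) * (mu\<^sup>2 - 1) = 0")
  case True
  then have "lam\<^sup>2 = 1 \<or> mu\<^sup>2 = 1" by simp
  moreover have "2 * real w1 * (lam\<^sup>2 - 1) * (mu\<^sup>2 - 1) = 0" using True by (simp add: mult.assoc)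
  then have "lam\<^sup>2 * mu\<^sup>2 = 1" using assms(4) by simp
  ultimately have "lam\<^sup>2 = 1" "mu\<^sup>2 = 1" by auto
  then have "lam = 1" "mu = 1" using assms(1,2) by (simp_all add: power2_eq_1_iff)
  with assms(3) show ?thesis by simp
next
  case False
  have "real w1 * ((lam\<^sup>2 - 1) * (mu\<^sup>2 - 1)) = real w2 * ((lam\<^sup>2 - 1) * (mu\<^sup>2 - 1))"
    using assms(4,5) by (simp add: algebra_simps)
  with False show ?thesis by simp
qed

theorem mainTheorem1:
  fixes lam mu :: real
  assumes "lam \<ge> 0" and "mu \<ge> 0" and "(lam, mu) \<noteq> (1, 1)"
  shows "(\<forall>w::nat. w > 0 \<longrightarrow>
            (\<forall>z::complex. poly (Dpoly lam mu w) z = 0 \<and> z \<noteq> 1 \<and> z \<noteq> -1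
               \<longrightarrow> order z (Dpoly lam mu w) = 1))
       \<and> (\<forall>w1 w2::nat.
            w1 > 0 \<and> (order 1 (Dpoly lam mu w1) \<ge> 2 \<or> order (-1) (Dpoly lam mu w1) \<ge> 2) \<and>
            w2 > 0 \<and> (order 1 (Dpoly lam mu w2) \<ge> 2 \<or> order (-1) (Dpoly lam mu w2) \<ge> 2)
            \<longrightarrow> w1 = w2)"
proof (intro conjI allI impI)
  fix w :: nat and z :: complex
  assume "w > 0" "poly (Dpoly lam mu w) z = 0 \<and> z \<noteq> 1 \<and> z \<noteq> -1"
  then show "order z (Dpoly lam mu w) = 1" using order_Dpoly_eq_1 by blast
next
  fix w1 w2 :: nat
  assume "w1 > 0 \<and> (order 1 (Dpoly lam mu w1) \<ge> 2 \<or> order (-1) (Dpoly lam mu w1) \<ge> 2) \<and>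
          w2 > 0 \<and> (order 1 (Dpoly lam mu w2) \<ge> 2 \<or> order (-1) (Dpoly lam mu w2) \<ge> 2)"
  then show "w1 = w2"
    using critical_width_unique[OF assms] Dpoly_multiple_root_pm1 by blast
qed

end
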